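(* There is a $17$-point code in $\mathrm{SO}(4)$ which is a regular simplex (all pairwise chordal distances between distinct points equal), is universally optimal, and has a symmetry group acting transitively on it. Moreover, there is no regular simplex in $\mathrm{SO}(4)$ with more than $17$ points.
   Context: $\mathrm{SO}(n)$ carries the chordal distance $d_c(U_1,U_2)=\|U_1-U_2\|_F$ (Frobenius norm), coming from the embedding $\mathrm{SO}(n)\subset\mathbb{R}^{n\times n}$. A code is a finite subset; a regular simplex is a code whose distinct points are pairwise equidistant. A function $g:(0,\infty)\to\mathbb{R}$ is completely monotonic if it is smooth and $(-1)^k g^{(k)}\ge 0$ for all $k\ge0$. A code $\mathcal{C}\subset \mathrm{SO}(n)$ is universally optimal if for every completely monotonic $g$ it minimizes the energy $\sum_{x\ne y\in\mathcal{C}} g(d_c(x,y)^2)$ among all codes in $\mathrm{SO}(n)$ of the same size. A symmetry of the code is an isometry of $\mathrm{SO}(4)$ (for $d_c$) mapping the code to itself. *)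

theory Defs
  imports "HOL-Analysis.Analysis"
begin

definition SO4 :: "(real^4^4) set" where
  "SO4 = {U. transpose U ** U = mat 1 \<and> det U = 1}"

definition chordal_dist :: "real^4^4 \<Rightarrow> real^4^4 \<Rightarrow> real" where
  "chordal_dist U V = sqrt (\<Sum>i\<in>UNIV. \<Sum>j\<in>UNIV. (U$i$j - V$i$j)^2)"

definition is_code :: "(real^4^4) set \<Rightarrow> bool" where
  "is_code C \<longleftrightarrow> finite C \<and> C \<subseteq> SO4"

definition regular_simplex :: "(real^4^4) set \<Rightarrow> bool" where
  "regular_simplex C \<longleftrightarrow> is_code C \<and>
     (\<exists>r. \<forall>x\<in>C. \<forall>y\<in>C. x \<noteq> y \<longrightarrow> chordal_dist x y = r)"

definition completely_monotonic :: "(real \<Rightarrow> real) \<Rightarrow> bool" where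
  "completely_monotonic g \<longleftrightarrow>
     (\<forall>k. \<forall>x>0. ((deriv ^^ k) g) differentiable (at x)) \<and>
     (\<forall>k. \<forall>x>0. (-1)^k * (deriv ^^ k) g x \<ge> 0)"

definition energy :: "(real \<Rightarrow> real) \<Rightarrow> (real^4^4) set \<Rightarrow> real" where
  "energy g C = (\<Sum>(x,y)\<in>{(x,y). x \<in> C \<and> y \<in> C \<and> x \<noteq> y}. g ((chordal_dist x y)^2))"

definition universally_optimal :: "(real^4^4) set \<Rightarrow> bool" where
  "universally_optimal C \<longleftrightarrow> is_code C \<and>
     (\<forall>g. completely_monotonic g \<longrightarrow>
        (\<forall>D. is_code D \<and> card D = card C \<longrightarrow> energy g C \<le> energy g D))"

definition SO4_isometry :: "(real^4^4 \<Rightarrow> real^4^4) \<Rightarrow> bool" where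
  "SO4_isometry f \<longleftrightarrow> bij_betw f SO4 SO4 \<and>
     (\<forall>x\<in>SO4. \<forall>y\<in>SO4. chordal_dist (f x) (f y) = chordal_dist x y)"

definition code_symmetry :: "(real^4^4) set \<Rightarrow> (real^4^4 \<Rightarrow> real^4^4) \<Rightarrow> bool" where
  "code_symmetry C f \<longleftrightarrow> SO4_isometry f \<and> f ` C = C"

definition symmetry_transitive :: "(real^4^4) set \<Rightarrow> bool" where
  "symmetry_transitive C \<longleftrightarrow> (\<forall>x\<in>C. \<forall>y\<in>C. \<exists>f. code_symmetry C f \<and> f x = y)"

end

theory Submission
  imports Defs
begin

text \<open>The code is the orbit of one point of SO(4) under a one-parameter group of isometries
  \<open>U \<mapsto> P(t) U Q(t)\<close>, sampled at \<open>t = k\<pi>/17\<close>, so the group acts transitively on it.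
  The frequencies of \<open>P\<close> and \<open>Q\<close> are chosen so that the Frobenius inner product of the points
  at parameters \<open>s\<close> and \<open>t\<close> is \<open>(cos 5\<tau> + cos 15\<tau>)(cos 3\<tau> + cos 9\<tau>)\<close> with \<open>\<tau> = t - s\<close>.
  For \<open>\<tau>\<close> a nonzero multiple of \<open>\<pi>/17\<close> this product is half the sum of \<open>cos 2k\<tau>\<close> over one
  representative \<open>k\<close> of each pair \<open>{k, 17 - k}\<close>, that is \<open>-1/4\<close>, so all squared distances
  equal \<open>17/2\<close>.

  Every point of SO(4) has Frobenius norm 2, so the squared distances of an \<open>N\<close>-point code sum
  to \<open>8N\<^sup>2 - 2\<parallel>\<Sum>x\<parallel>\<^sup>2 \<le> 8N\<^sup>2\<close>. A completely monotonic \<open>g\<close> is convex and decreasing, so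
  comparing it with its tangent at the mean \<open>8N/(N - 1)\<close> bounds the energy below by
  \<open>N(N - 1) g(8N/(N - 1))\<close>, which an equidistant code at exactly that distance attains.

  Finally an equidistant set is affinely independent, hence has at most \<open>16 + 1\<close> points in the
  space of real \<open>4 \<times> 4\<close> matrices.\<close>

section \<open>Frobenius geometry of real matrices\<close>

lemma inner_matrix: "inner (X::real^'n^'m) Y = (\<Sum>i\<in>UNIV. \<Sum>j\<in>UNIV. X$i$j * Y$i$j)"
  by (simp add: inner_vec_def)

lemma sum_swap3: "(\<Sum>i\<in>A. \<Sum>j\<in>B. \<Sum>k\<in>C. f i j k) = (\<Sum>k\<in>C. \<Sum>j\<in>B. \<Sum>i\<in>A. f i j k)"
proof -
  have "(\<Sum>i\<in>A. \<Sum>j\<in>B. \<Sum>k\<in>C. f i j k) = (\<Sum>i\<in>A. \<Sum>k\<in>C. \<Sum>j\<in>B. f i j k)"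
    by (rule sum.cong[OF refl], rule sum.swap)
  also have "\<dots> = (\<Sum>k\<in>C. \<Sum>i\<in>A. \<Sum>j\<in>B. f i j k)"
    by (rule sum.swap)
  also have "\<dots> = (\<Sum>k\<in>C. \<Sum>j\<in>B. \<Sum>i\<in>A. f i j k)"
    by (rule sum.cong[OF refl], rule sum.swap)
  finally show ?thesis .
qed

lemma inner_matrix_mul_left:
  fixes A :: "real^'m^'k" and X :: "real^'n^'m" and Y :: "real^'n^'k"
  shows "inner (A ** X) Y = inner X (transpose A ** Y)"
proof -
  have "inner (A ** X) Y = (\<Sum>i\<in>UNIV. \<Sum>j\<in>UNIV. \<Sum>k\<in>UNIV. A$i$k * X$k$j * Y$i$j)"
    by (simp add: inner_matrix matrix_matrix_mult_def sum_distrib_right)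
  also have "\<dots> = (\<Sum>k\<in>UNIV. \<Sum>j\<in>UNIV. \<Sum>i\<in>UNIV. A$i$k * X$k$j * Y$i$j)"
    by (rule sum_swap3)
  also have "\<dots> = inner X (transpose A ** Y)"
    by (simp add: inner_matrix matrix_matrix_mult_def transpose_def sum_distrib_left mult_ac)
  finally show ?thesis .
qed

lemma inner_matrix_mul_right:
  fixes B :: "real^'k^'n" and X :: "real^'n^'m" and Y :: "real^'k^'m"
  shows "inner (X ** B) Y = inner X (Y ** transpose B)"
proof -
  have "inner (X ** B) Y = (\<Sum>i\<in>UNIV. \<Sum>j\<in>UNIV. \<Sum>k\<in>UNIV. X$i$k * B$k$j * Y$i$j)"
    by (simp add: inner_matrix matrix_matrix_mult_def sum_distrib_right)
  also have "\<dots> = (\<Sum>i\<in>UNIV. \<Sum>k\<in>UNIV. \<Sum>j\<in>UNIV. X$i$k * B$k$j * Y$i$j)"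
    by (rule sum.cong[OF refl], rule sum.swap)
  also have "\<dots> = inner X (Y ** transpose B)"
    by (simp add: inner_matrix matrix_matrix_mult_def transpose_def sum_distrib_left mult_ac)
  finally show ?thesis .
qed

lemma inner_matrix_sandwich:
  fixes A :: "real^'m^'k" and X :: "real^'n^'m" and B :: "real^'l^'n" and Y :: "real^'l^'k"
  shows "inner (A ** X ** B) Y = inner X (transpose A ** Y ** transpose B)"
proof -
  have "inner (A ** X ** B) Y = inner (A ** X) (Y ** transpose B)"
    by (rule inner_matrix_mul_right)
  also have "\<dots> = inner X (transpose A ** (Y ** transpose B))"
    by (rule inner_matrix_mul_left)
  finally show ?thesis by (simp add: matrix_mul_assoc)
qed

lemma transpose_sandwich_cancel:
  fixes A :: "real^'m^'m" and B :: "real^'n^'n" and U :: "real^'n^'m"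
  assumes "orthogonal_matrix A" "orthogonal_matrix B"
  shows "transpose A ** (A ** U ** B) ** transpose B = U"
  using assms by (simp add: matrix_mul_assoc orthogonal_matrix_def) (simp add: matrix_mul_assoc[symmetric])

lemma inner_orthogonal_sandwich:
  assumes "orthogonal_matrix (P::real^'m^'m)" "orthogonal_matrix (Q::real^'n^'n)"
  shows "inner (P ** X ** Q) (P ** Y ** Q) = inner X Y"
  using assms by (simp add: inner_matrix_sandwich transpose_sandwich_cancel)

lemma norm_orthogonal_sandwich:
  assumes "orthogonal_matrix P" "orthogonal_matrix Q"
  shows "norm (P ** (X::real^'n^'m) ** Q) = norm X"
  using inner_orthogonal_sandwich[OF assms] by (simp add: norm_eq_sqrt_inner)

lemma norm_orthogonal_matrix:
  assumes "orthogonal_matrix (Q::real^'n^'n)"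
  shows "norm Q = sqrt CARD('n)"
proof -
  have "inner Q Q = inner (mat 1) (mat 1 :: real^'n^'n)"
    using inner_orthogonal_sandwich[OF assms orthogonal_matrix_id, of "mat 1" "mat 1"] by simp
  also have "\<dots> = CARD('n)"
    by (simp add: inner_vec_def mat_def if_distrib[of "\<lambda>x. _ * x"] cong: if_cong)
  finally show ?thesis by (simp add: norm_eq_sqrt_inner)
qed

lemma matrix_diff_ldistrib: "(A::'a::ring_1^'n^'m) ** (B - C) = A ** B - A ** C"
  by (simp add: vec_eq_iff matrix_matrix_mult_def sum_subtractf algebra_simps)

lemma matrix_diff_rdistrib: "((A::'a::ring_1^'n^'m) - B) ** C = A ** C - B ** C"
  by (simp add: vec_eq_iff matrix_matrix_mult_def sum_subtractf algebra_simps)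

lemma mat_neg_one_mult: "mat (-1) ** (X::'a::ring_1^'n^'m) = - X"
  by (simp add: vec_eq_iff matrix_matrix_mult_def mat_def if_distrib[of "\<lambda>x. x * _"] cong: if_cong)

lemma mult_mat_neg_one: "(X::'a::ring_1^'n^'m) ** mat (-1) = - X"
  by (simp add: vec_eq_iff matrix_matrix_mult_def mat_def if_distrib[of "\<lambda>x. _ * x"] cong: if_cong)

lemma det_4:
  "det (A::'a::comm_ring_1^4^4) =
   A$1$1*A$2$2*A$3$3*A$4$4 - A$1$1*A$2$2*A$3$4*A$4$3 - A$1$1*A$2$3*A$3$2*A$4$4
 + A$1$1*A$2$3*A$3$4*A$4$2 + A$1$1*A$2$4*A$3$2*A$4$3 - A$1$1*A$2$4*A$3$3*A$4$2
 - A$1$2*A$2$1*A$3$3*A$4$4 + A$1$2*A$2$1*A$3$4*A$4$3 + A$1$2*A$2$3*A$3$1*A$4$4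
 - A$1$2*A$2$3*A$3$4*A$4$1 - A$1$2*A$2$4*A$3$1*A$4$3 + A$1$2*A$2$4*A$3$3*A$4$1
 + A$1$3*A$2$1*A$3$2*A$4$4 - A$1$3*A$2$1*A$3$4*A$4$2 - A$1$3*A$2$2*A$3$1*A$4$4
 + A$1$3*A$2$2*A$3$4*A$4$1 + A$1$3*A$2$4*A$3$1*A$4$2 - A$1$3*A$2$4*A$3$2*A$4$1
 - A$1$4*A$2$1*A$3$2*A$4$3 + A$1$4*A$2$1*A$3$3*A$4$2 + A$1$4*A$2$2*A$3$1*A$4$3
 - A$1$4*A$2$2*A$3$3*A$4$1 - A$1$4*A$2$3*A$3$1*A$4$2 + A$1$4*A$2$3*A$3$2*A$4$1"
proof -
  have f1: "finite {2::4, 3, 4}" "1 \<notin> {2::4, 3, 4}" by auto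
  have f2: "finite {3::4, 4}" "2 \<notin> {3::4, 4}" by auto
  have f3: "finite {4::4}" "3 \<notin> {4::4}" by auto
  show ?thesis
    unfolding det_def UNIV_4
    unfolding sum_over_permutations_insert[OF f1]
    unfolding sum_over_permutations_insert[OF f2]
    unfolding sum_over_permutations_insert[OF f3]
    unfolding permutes_sing
    by (simp add: sign_swap_id permutation_swap_id sign_compose permutation_compose swap_id_eq algebra_simps)
qed

section \<open>Chordal geometry of SO(4)\<close>

lemma chordal_dist_eq_norm: "chordal_dist U V = norm (U - V)"
  by (simp add: chordal_dist_def norm_eq_sqrt_inner inner_vec_def power2_eq_square)

lemma SO4_iff: "U \<in> SO4 \<longleftrightarrow> orthogonal_matrix U \<and> det U = 1"
  by (simp add: SO4_def orthogonal_matrix)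

lemma norm_SO4: "U \<in> SO4 \<Longrightarrow> norm U = 2"
  using norm_orthogonal_matrix[of U] by (simp add: SO4_iff)

lemma SO4_mult: "A \<in> SO4 \<Longrightarrow> B \<in> SO4 \<Longrightarrow> A ** B \<in> SO4"
  by (simp add: SO4_iff orthogonal_matrix_mul det_mul)

lemma SO4_transpose: "A \<in> SO4 \<Longrightarrow> transpose A \<in> SO4"
  by (simp add: SO4_iff)

lemma SO4_isometry_sandwich:
  assumes P: "P \<in> SO4" and Q: "Q \<in> SO4"
  shows "SO4_isometry (\<lambda>U. P ** U ** Q)"
  unfolding SO4_isometry_def
proof
  have orth: "orthogonal_matrix P" "orthogonal_matrix Q"
    using P Q by (simp_all add: SO4_iff)
  show "bij_betw (\<lambda>U. P ** U ** Q) SO4 SO4"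
    using transpose_sandwich_cancel[OF orth] transpose_sandwich_cancel[of "transpose P" "transpose Q"] orth
    by (intro bij_betw_byWitness[where f' = "\<lambda>V. transpose P ** V ** transpose Q"])
      (auto intro: SO4_mult SO4_transpose P Q)
  show "\<forall>x\<in>SO4. \<forall>y\<in>SO4. chordal_dist (P ** x ** Q) (P ** y ** Q) = chordal_dist x y"
    using orth
    by (simp add: chordal_dist_eq_norm norm_orthogonal_sandwich
        flip: matrix_diff_ldistrib matrix_diff_rdistrib)
qed

lemma code_symmetry_if_maps_into:
  assumes "SO4_isometry f" "is_code C" "f ` C \<subseteq> C"
  shows "code_symmetry C f"
proof -
  have "inj_on f C"
    using assms(1,2) by (metis SO4_isometry_def bij_betw_imp_inj_on inj_on_subset is_code_def)
  then have "f ` C = C"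
    using assms(2,3) card_image card_subset_eq by (metis is_code_def)
  then show ?thesis using assms(1) by (simp add: code_symmetry_def)
qed

section \<open>Equidistant sets\<close>

lemma norm_affine_combination_sq:
  fixes S :: "'a::real_inner set"
  assumes "sum u S = 0"
  shows "(norm (\<Sum>x\<in>S. u x *\<^sub>R x))\<^sup>2 = - (\<Sum>x\<in>S. \<Sum>y\<in>S. u x * u y * (norm (x - y))\<^sup>2) / 2"
proof -
  have sq_dist: "(norm (x - y))\<^sup>2 = (norm x)\<^sup>2 + (norm y)\<^sup>2 - 2 * inner x y" for x y :: 'a
    using dot_norm_neg[of x y] by simp
  have "(\<Sum>x\<in>S. \<Sum>y\<in>S. u x * u y * (norm x)\<^sup>2) = (\<Sum>x\<in>S. u x * (norm x)\<^sup>2 * sum u S)"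
    by (simp add: sum_distrib_left sum_distrib_right mult_ac)
  then have left: "(\<Sum>x\<in>S. \<Sum>y\<in>S. u x * u y * (norm x)\<^sup>2) = 0"
    using assms by simp
  have right: "(\<Sum>x\<in>S. \<Sum>y\<in>S. u x * u y * (norm y)\<^sup>2) = 0"
    using assms by (simp add: sum_distrib_left[symmetric] sum_distrib_right[symmetric] mult.assoc)
  have "(\<Sum>x\<in>S. \<Sum>y\<in>S. u x * u y * (norm (x - y))\<^sup>2)
      = (\<Sum>x\<in>S. \<Sum>y\<in>S. u x * u y * (norm x)\<^sup>2) + (\<Sum>x\<in>S. \<Sum>y\<in>S. u x * u y * (norm y)\<^sup>2)
        - 2 * (\<Sum>x\<in>S. \<Sum>y\<in>S. u x * u y * inner x y)"
    unfolding sq_dist by (simp add: algebra_simps sum.distrib sum_subtractf sum_distrib_left)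
  also have "\<dots> = - 2 * (norm (\<Sum>x\<in>S. u x *\<^sub>R x))\<^sup>2"
    unfolding left right
    by (simp add: power2_norm_eq_inner inner_sum_left inner_sum_right sum_distrib_left inner_commute mult_ac sum_negf)
  finally show ?thesis by simp
qed

lemma equidistant_imp_affine_independent:
  fixes S :: "'a::real_inner set"
  assumes "finite S" "r \<noteq> 0"
    and equi: "\<And>x y. x \<in> S \<Longrightarrow> y \<in> S \<Longrightarrow> x \<noteq> y \<Longrightarrow> dist x y = r"
  shows "\<not> affine_dependent S"
proof
  assume "affine_dependent S"
  then obtain u v where u0: "sum u S = 0" and v: "v \<in> S" "u v \<noteq> 0"
    and comb: "(\<Sum>x\<in>S. u x *\<^sub>R x) = 0"
    using affine_dependent_explicit_finite[OF assms(1)] by blast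
  have "(\<Sum>x\<in>S. \<Sum>y\<in>S. u x * u y * (norm (x - y))\<^sup>2)
      = (\<Sum>x\<in>S. \<Sum>y\<in>S. r\<^sup>2 * (u x * u y) - (if x = y then r\<^sup>2 * (u x)\<^sup>2 else 0))"
    by (intro sum.cong refl) (auto simp: equi dist_norm[symmetric] power2_eq_square)
  also have "\<dots> = r\<^sup>2 * ((\<Sum>x\<in>S. \<Sum>y\<in>S. u x * u y) - (\<Sum>x\<in>S. (u x)\<^sup>2))"
    using assms(1) by (simp add: sum_subtractf sum_distrib_left right_diff_distrib)
  also have "(\<Sum>x\<in>S. \<Sum>y\<in>S. u x * u y) = (sum u S)\<^sup>2"
    by (simp add: power2_eq_square sum_product)
  finally have "(\<Sum>x\<in>S. (u x)\<^sup>2) = 0"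
    using norm_affine_combination_sq[OF u0] comb u0 \<open>r \<noteq> 0\<close> by simp
  moreover have "(u v)\<^sup>2 \<le> (\<Sum>x\<in>S. (u x)\<^sup>2)"
    using assms(1) v(1) by (intro member_le_sum) auto
  ultimately show False
    using v(2) by simp
qed

lemma card_equidistant_le:
  fixes S :: "'a::euclidean_space set"
  assumes "finite S" and equi: "\<And>x y. x \<in> S \<Longrightarrow> y \<in> S \<Longrightarrow> x \<noteq> y \<Longrightarrow> dist x y = r"
  shows "card S \<le> DIM('a) + 1"
proof (rule ccontr)
  assume "\<not> card S \<le> DIM('a) + 1"
  then have big: "card S \<ge> DIM('a) + 2" by simp
  then have "\<not> card S \<le> Suc 0" by simp
  then obtain x y where "x \<in> S" "y \<in> S" "x \<noteq> y"
    using card_le_Suc0_iff_eq[OF assms(1)] by blast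
  then have "r \<noteq> 0" using equi by fastforce
  then show False
    using equidistant_imp_affine_independent[OF assms(1) _ equi] affine_dependent_biggerset[OF assms(1) big]
    by blast
qed

lemma card_regular_simplex_le: "regular_simplex C \<Longrightarrow> card C \<le> 17"
  using card_equidistant_le[where 'a = "real^4^4"]
  by (fastforce simp: regular_simplex_def is_code_def chordal_dist_eq_norm dist_norm)

section \<open>A lower bound for the energy\<close>

lemma completely_monotonic_deriv_nonpos:
  assumes "completely_monotonic g" "0 < x"
  shows "deriv g x \<le> 0"
proof -
  have "0 \<le> (-1) ^ 1 * (deriv ^^ 1) g x"
    using assms unfolding completely_monotonic_def by blast
  then show ?thesis by simp
qed

lemma completely_monotonic_above_tangent:
  assumes "completely_monotonic g" "0 < s" "0 < t"
  shows "g s + deriv g s * (t - s) \<le> g t"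
proof -
  have diff: "DERIV ((deriv ^^ k) g) x :> (deriv ^^ Suc k) g x" if "0 < x" for k x
    using assms(1) that by (simp add: completely_monotonic_def DERIV_deriv_iff_real_differentiable)
  have "0 \<le> (-1) ^ 2 * (deriv ^^ 2) g x" if "0 < x" for x
    using assms(1) that unfolding completely_monotonic_def by blast
  then have convex: "0 \<le> deriv (deriv g) x" if "0 < x" for x
    using that by (simp add: numeral_2_eq_2)
  have "deriv g s * (t - s) \<le> g t - g s"
    using diff[of _ 0] diff[of _ 1] convex assms(2,3)
    by (intro f''_imp_f'[of "{0<..}"]) (auto simp: numeral_2_eq_2)
  then show ?thesis by simp
qed

definition off_diag :: "'a set \<Rightarrow> ('a \<times> 'a) set" where
  "off_diag D = {(x, y). x \<in> D \<and> y \<in> D \<and> x \<noteq> y}"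

lemma card_off_diag:
  assumes "finite D"
  shows "card (off_diag D) = card D * (card D - 1)"
proof -
  have "off_diag D = D \<times> D - (\<lambda>x. (x, x)) ` D" unfolding off_diag_def by auto
  moreover have "card ((\<lambda>x. (x, x)) ` D) = card D" by (rule card_image) (simp add: inj_on_def)
  ultimately show ?thesis
    using assms by (simp add: card_Diff_subset card_cartesian_product diff_mult_distrib2 image_subset_iff)
qed

lemma sum_off_diag:
  assumes "finite D" "\<And>x. x \<in> D \<Longrightarrow> h x x = 0"
  shows "(\<Sum>(x, y)\<in>off_diag D. h x y) = (\<Sum>x\<in>D. \<Sum>y\<in>D. h x y)"
proof -
  have "(\<Sum>(x, y)\<in>off_diag D. h x y) = (\<Sum>(x, y)\<in>D \<times> D. h x y)"
    by (rule sum.mono_neutral_left) (auto simp: off_diag_def assms)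
  then show ?thesis by (simp add: sum.cartesian_product)
qed

lemma energy_eq_sum_off_diag: "energy g C = (\<Sum>(x, y)\<in>off_diag C. g ((norm (x - y))\<^sup>2))"
  unfolding energy_def off_diag_def chordal_dist_eq_norm ..

lemma sum_off_diag_dist_sq_sphere_le:
  fixes D :: "'a::real_inner set"
  assumes "finite D" "\<And>x. x \<in> D \<Longrightarrow> norm x = \<rho>"
  shows "(\<Sum>(x, y)\<in>off_diag D. (norm (x - y))\<^sup>2) \<le> 2 * \<rho>\<^sup>2 * (card D)\<^sup>2"
proof -
  have "(norm (x - y))\<^sup>2 = 2 * \<rho>\<^sup>2 - 2 * inner x y" if "x \<in> D" "y \<in> D" for x y
    using dot_norm_neg[of x y] assms(2) that by simp
  then have "(\<Sum>(x, y)\<in>off_diag D. (norm (x - y))\<^sup>2) = (\<Sum>x\<in>D. \<Sum>y\<in>D. 2 * \<rho>\<^sup>2 - 2 * inner x y)"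
    using assms(1) by (simp add: sum_off_diag)
  also have "\<dots> = 2 * \<rho>\<^sup>2 * (card D)\<^sup>2 - 2 * (norm (\<Sum>x\<in>D. x))\<^sup>2"
    by (simp add: sum_subtractf power2_norm_eq_inner inner_sum_left inner_sum_right sum_distrib_left power2_eq_square[of "real (card D)"] inner_commute)
  finally show ?thesis by simp
qed

lemma energy_ge_simplex_bound:
  assumes g: "completely_monotonic g" and D: "is_code D" "card D = N" "2 \<le> N"
  shows "real (N * (N - 1)) * g (8 * real N / (real N - 1)) \<le> energy g D"
proof -
  define t0 where "t0 = 8 * real N / (real N - 1)"
  define S where "S = (\<Sum>(x, y)\<in>off_diag D. (norm (x - y))\<^sup>2)"
  have fin: "finite D" using D by (simp add: is_code_def)
  have t0: "0 < t0" using D(3) by (simp add: t0_def)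
  have card: "card (off_diag D) = N * (N - 1)" using card_off_diag[OF fin] D(2) by simp
  have "S \<le> 2 * 2\<^sup>2 * (real N)\<^sup>2"
    unfolding S_def using sum_off_diag_dist_sq_sphere_le[OF fin, of 2] D norm_SO4
    by (force simp: is_code_def)
  also have "\<dots> = real (N * (N - 1)) * t0"
    using D(3) by (simp add: t0_def of_nat_diff power2_eq_square field_simps)
  finally have "0 \<le> deriv g t0 * (S - real (N * (N - 1)) * t0)"
    using completely_monotonic_deriv_nonpos[OF g t0] by (simp add: mult_nonpos_nonpos)
  then have "real (N * (N - 1)) * g t0 \<le> real (N * (N - 1)) * g t0 + deriv g t0 * (S - real (N * (N - 1)) * t0)"
    by simp
  also have "\<dots> = (\<Sum>(x, y)\<in>off_diag D. g t0 + deriv g t0 * ((norm (x - y))\<^sup>2 - t0))"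
    by (simp add: S_def card sum.distrib sum_subtractf sum_distrib_left case_prod_beta algebra_simps)
  also have "\<dots> \<le> energy g D"
    unfolding energy_eq_sum_off_diag
    by (intro sum_mono) (auto simp: off_diag_def intro!: completely_monotonic_above_tangent[OF g t0])
  finally show ?thesis
    using D(3) by (simp add: t0_def of_nat_diff)
qed

lemma energy_equidistant:
  assumes "finite C" "\<And>x y. x \<in> C \<Longrightarrow> y \<in> C \<Longrightarrow> x \<noteq> y \<Longrightarrow> (chordal_dist x y)\<^sup>2 = t"
  shows "energy g C = real (card C * (card C - 1)) * g t"
proof -
  have "energy g C = (\<Sum>(x, y)\<in>off_diag C. g t)"
    unfolding energy_eq_sum_off_diag
    by (intro sum.cong refl) (auto simp: off_diag_def assms(2) chordal_dist_eq_norm[symmetric])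
  then show ?thesis using card_off_diag[OF assms(1)] by simp
qed

lemma universally_optimal_if_equidistant:
  assumes "is_code C" "card C = N" "2 \<le> N"
    and "\<And>x y. x \<in> C \<Longrightarrow> y \<in> C \<Longrightarrow> x \<noteq> y \<Longrightarrow> (chordal_dist x y)\<^sup>2 = 8 * real N / (real N - 1)"
  shows "universally_optimal C"
  unfolding universally_optimal_def
  using assms energy_ge_simplex_bound energy_equidistant[OF _ assms(4)]
  by (auto simp: is_code_def)

section \<open>Cosine sums over roots of unity\<close>

lemma sin_half_mult_sum_cos:
  "2 * sin (x / 2) * (\<Sum>r<n. cos (real r * x)) = sin ((real n - 1 / 2) * x) + sin (x / 2)"
proof (induction n)
  case 0
  then show ?case by simp
next
  case (Suc n)
  have "2 * sin (x / 2) * cos (real n * x) = sin ((real n + 1 / 2) * x) - sin ((real n - 1 / 2) * x)"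
    using sin_add[of "real n * x" "x / 2"] sin_diff[of "real n * x" "x / 2"]
    by (simp add: algebra_simps)
  then show ?case
    using Suc by (simp add: distrib_left algebra_simps)
qed

lemma sum_cos_roots_of_unity:
  fixes m :: int
  assumes "0 < n" "\<not> int n dvd m"
  shows "(\<Sum>r<n. cos (real r * (2 * of_int m * pi / n))) = 0"
proof -
  define y where "y = of_int m * pi / n"
  have "sin y \<noteq> 0"
  proof
    assume "sin y = 0"
    then obtain i :: int where "y = of_int i * pi" by (auto simp: sin_zero_iff_int2)
    then have "of_int m = (of_int (int n * i) :: real)" using assms(1) by (simp add: y_def field_simps)
    then show False using assms(2) by (metis dvd_triv_left of_int_eq_iff)
  qed
  moreover have "sin ((real n - 1 / 2) * (2 * y)) = - sin y"
  proof -
    have "(real n - 1 / 2) * (2 * y) = 2 * pi * of_int m - y"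
      using assms(1) by (simp add: y_def field_simps)
    then show ?thesis by (simp only: sin_diff sin_int_2pin cos_int_2pin)
  qed
  ultimately show ?thesis
    using sin_half_mult_sum_cos[of "2 * y" n] by (simp add: y_def mult.assoc)
qed

lemma cos_product_seventeen:
  fixes m :: int
  assumes "\<not> 17 dvd m"
  defines "y \<equiv> of_int m * pi / 17"
  shows "(cos (5 * y) + cos (15 * y)) * (cos (3 * y) + cos (9 * y)) = -1/4"
proof -
  have "(\<Sum>r<17. cos (real r * (2 * y))) = 0"
    using sum_cos_roots_of_unity[of 17 m] assms by (simp add: mult.assoc)
  then have roots: "1 + cos (2*y) + cos (4*y) + cos (6*y) + cos (8*y) + cos (10*y) + cos (12*y)
    + cos (14*y) + cos (16*y) + cos (18*y) + cos (20*y) + cos (22*y) + cos (24*y)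
    + cos (26*y) + cos (28*y) + cos (30*y) + cos (32*y) = 0"
    by (simp add: lessThan_nat_numeral algebra_simps)
  have reflect: "cos (34 * y - z) = cos z" for z
  proof -
    have "34 * y = 2 * pi * of_int m" by (simp add: y_def)
    then show ?thesis by (simp only: cos_diff sin_int_2pin cos_int_2pin)
  qed
  from reflect[of "2*y"] reflect[of "4*y"] reflect[of "6*y"] reflect[of "8*y"]
    reflect[of "10*y"] reflect[of "12*y"] reflect[of "14*y"] reflect[of "16*y"]
  have "cos (2*y) + cos (4*y) + cos (6*y) + cos (8*y) + cos (10*y) + cos (12*y) + cos (14*y)
      + cos (16*y) = -1/2"
    using roots by simp
  moreover have "(cos (5 * y) + cos (15 * y)) * (cos (3 * y) + cos (9 * y))
      = (cos (2*y) + cos (8*y) + cos (4*y) + cos (14*y) + cos (12*y) + cos (18*y)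
         + cos (6*y) + cos (24*y)) / 2"
    by (simp add: distrib_left distrib_right cos_times_cos add_divide_distrib algebra_simps)
  moreover have "cos (18*y) = cos (16*y)" "cos (24*y) = cos (10*y)"
    using reflect[of "16*y"] reflect[of "10*y"] by simp_all
  ultimately show ?thesis by simp
qed

section \<open>The 17-point simplex\<close>

definition block_rotation :: "real \<Rightarrow> real \<Rightarrow> real^4^4" where
  "block_rotation a b = (\<chi> i j.
     if i = 1 then (if j = 1 then cos a else if j = 2 then - sin a else 0)
     else if i = 2 then (if j = 1 then sin a else if j = 2 then cos a else 0)
     else if i = 3 then (if j = 3 then cos b else if j = 4 then - sin b else 0)
     else (if j = 3 then sin b else if j = 4 then cos b else 0))"

lemma block_rotation_mult: "block_rotation a b ** block_rotation c d = block_rotation (a + c) (b + d)"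
  by (simp add: vec_eq_iff forall_4 matrix_matrix_mult_def sum_4 block_rotation_def cos_add sin_add)

lemma transpose_block_rotation: "transpose (block_rotation a b) = block_rotation (- a) (- b)"
  by (simp add: vec_eq_iff forall_4 transpose_def block_rotation_def)

lemma block_rotation_pi: "block_rotation (-5 * pi) (15 * pi) = mat (-1)" "block_rotation (3 * pi) (-9 * pi) = mat (-1)"
  by (simp_all add: block_rotation_def mat_def vec_eq_iff forall_4)

lemma block_rotation_SO4: "block_rotation a b \<in> SO4"
proof -
  have "orthogonal_matrix (block_rotation a b)"
    unfolding orthogonal_matrix transpose_block_rotation block_rotation_mult
    by (simp add: block_rotation_def mat_def vec_eq_iff forall_4)
  moreover have "det (block_rotation a b) = 1"
    unfolding det_4
    by (simp add: block_rotation_def, insert sin_cos_squared_add3[of a] sin_cos_squared_add3[of b], algebra)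
  ultimately show ?thesis by (simp add: SO4_iff)
qed

definition base_point :: "real^4^4" where
  "base_point = (\<chi> i j.
     if i = 1 then (if j = 1 then 1 else 0)
     else if i = 2 then (if j = 4 then 1 else 0)
     else if i = 3 then (if j = 3 then 1 else 0)
     else (if j = 2 then -1 else 0))"

lemma base_point_SO4: "base_point \<in> SO4"
  unfolding SO4_iff orthogonal_matrix det_4
  by (simp add: vec_eq_iff forall_4 matrix_matrix_mult_def sum_4 base_point_def transpose_def mat_def)

lemma inner_base_point_sandwich:
  "inner base_point (block_rotation a b ** base_point ** block_rotation c d)
     = (cos a + cos b) * (cos c + cos d)"
  by (simp add: inner_vec_def sum_4 matrix_matrix_mult_def block_rotation_def base_point_def algebra_simps)

definition simplex_point :: "real \<Rightarrow> real^4^4" where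
  "simplex_point t = block_rotation (-5 * t) (15 * t) ** base_point ** block_rotation (3 * t) (-9 * t)"

lemma simplex_point_SO4: "simplex_point t \<in> SO4"
  unfolding simplex_point_def by (intro SO4_mult block_rotation_SO4 base_point_SO4)

lemma simplex_point_shift:
  "block_rotation (-5 * s) (15 * s) ** simplex_point t ** block_rotation (3 * s) (-9 * s)
     = simplex_point (s + t)"
proof -
  have "block_rotation (-5 * s) (15 * s) ** simplex_point t ** block_rotation (3 * s) (-9 * s)
      = (block_rotation (-5 * s) (15 * s) ** block_rotation (-5 * t) (15 * t)) ** base_point
          ** (block_rotation (3 * t) (-9 * t) ** block_rotation (3 * s) (-9 * s))"
    by (simp add: simplex_point_def matrix_mul_assoc)
  then show ?thesis
    by (simp add: block_rotation_mult simplex_point_def algebra_simps)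
qed

lemma simplex_point_add_pi: "simplex_point (t + pi) = simplex_point t"
  using simplex_point_shift[of pi t, unfolded block_rotation_pi mat_neg_one_mult mult_mat_neg_one]
  by (simp add: add.commute)

lemma simplex_point_add_nat_pi: "simplex_point (t + real m * pi) = simplex_point t"
proof (induction m)
  case (Suc m)
  then show ?case
    using simplex_point_add_pi[of "t + real m * pi"] by (simp add: algebra_simps)
qed simp

lemma inner_simplex_point:
  "inner (simplex_point s) (simplex_point t)
     = (cos (5 * (t - s)) + cos (15 * (t - s))) * (cos (3 * (t - s)) + cos (9 * (t - s)))"
proof -
  have "inner (simplex_point s) (simplex_point t)
      = inner base_point (block_rotation (5 * s) (-15 * s) ** simplex_point t ** block_rotation (-3 * s) (9 * s))"
    unfolding simplex_point_def[of s] inner_matrix_sandwich transpose_block_rotation by simp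
  also have "\<dots> = inner base_point (simplex_point (t - s))"
    using simplex_point_shift[of "- s" t] by (simp add: algebra_simps)
  also have "\<dots> = (cos (-5 * (t - s)) + cos (15 * (t - s))) * (cos (3 * (t - s)) + cos (-9 * (t - s)))"
    unfolding simplex_point_def by (rule inner_base_point_sandwich)
  finally show ?thesis by (simp only: mult_minus_left cos_minus)
qed

definition simplex17 :: "(real^4^4) set" where
  "simplex17 = (\<lambda>k. simplex_point (real k * pi / 17)) ` {..<17}"

lemma simplex_point_mod_17:
  "simplex_point (real n * pi / 17) = simplex_point (real (n mod 17) * pi / 17)"
proof -
  have "real n = real (n mod 17) + 17 * real (n div 17)"
    by (metis add.commute div_mult_mod_eq mult.commute of_nat_add of_nat_mult of_nat_numeral)
  then have "real n * pi / 17 = real (n mod 17) * pi / 17 + real (n div 17) * pi"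
    by (simp add: field_simps)
  then show ?thesis by (simp only: simplex_point_add_nat_pi)
qed

lemma dist_sq_simplex17_points:
  assumes "j < 17" "k < 17" "j \<noteq> k"
  shows "(norm (simplex_point (real j * pi / 17) - simplex_point (real k * pi / 17)))\<^sup>2 = 17 / 2"
proof -
  have diff: "real k * pi / 17 - real j * pi / 17 = of_int (int k - int j) * pi / 17"
    by (simp add: field_simps)
  have "\<not> 17 dvd (int k - int j)"
    using assms by presburger
  then have "inner (simplex_point (real j * pi / 17)) (simplex_point (real k * pi / 17)) = -1/4"
    unfolding inner_simplex_point diff by (rule cos_product_seventeen)
  then show ?thesis
    using dot_norm_neg[of "simplex_point (real j * pi / 17)" "simplex_point (real k * pi / 17)"]
    by (simp add: norm_SO4 simplex_point_SO4)
qed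

lemma simplex17_code: "is_code simplex17"
  by (auto simp: is_code_def simplex17_def simplex_point_SO4)

lemma card_simplex17: "card simplex17 = 17"
proof -
  have "inj_on (\<lambda>k. simplex_point (real k * pi / 17)) {..<17}"
    by (rule inj_onI) (metis dist_sq_simplex17_points lessThan_iff diff_self norm_zero
        power_zero_numeral zero_neq_numeral divide_eq_0_iff)
  then show ?thesis by (simp add: simplex17_def card_image)
qed

lemma chordal_dist_sq_simplex17:
  assumes "x \<in> simplex17" "y \<in> simplex17" "x \<noteq> y"
  shows "(chordal_dist x y)\<^sup>2 = 17 / 2"
proof -
  obtain j k where "j < 17" "k < 17"
    and "x = simplex_point (real j * pi / 17)" "y = simplex_point (real k * pi / 17)"
    using assms(1,2) by (auto simp: simplex17_def)
  with assms(3) show ?thesis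
    by (metis chordal_dist_eq_norm dist_sq_simplex17_points)
qed

lemma simplex17_transitive: "symmetry_transitive simplex17"
  unfolding symmetry_transitive_def
proof (intro ballI)
  fix x y assume "x \<in> simplex17" "y \<in> simplex17"
  then obtain j k where jk: "j < 17" "k < 17"
    and x: "x = simplex_point (real j * pi / 17)" and y: "y = simplex_point (real k * pi / 17)"
    by (auto simp: simplex17_def)
  \<comment> \<open>\<open>k + 17 - j\<close> rather than \<open>k - j\<close>: subtraction on \<open>nat\<close> truncates\<close>
  define s where "s = real (k + 17 - j) * pi / 17"
  define f where "f U = block_rotation (-5 * s) (15 * s) ** U ** block_rotation (3 * s) (-9 * s)" for U
  have f_point: "f (simplex_point (real n * pi / 17)) = simplex_point (real ((n + (k + 17 - j)) mod 17) * pi / 17)"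
    for n
    unfolding f_def simplex_point_shift
    by (subst simplex_point_mod_17[symmetric]) (simp add: s_def field_simps)
  have "SO4_isometry f"
    unfolding f_def by (intro SO4_isometry_sandwich block_rotation_SO4)
  moreover have "f ` simplex17 \<subseteq> simplex17"
    by (auto simp: simplex17_def f_point)
  moreover have "f x = y"
    using jk by (simp add: x y f_point)
  ultimately show "\<exists>f. code_symmetry simplex17 f \<and> f x = y"
    using code_symmetry_if_maps_into simplex17_code by blast
qed

theorem theorem8p1:
  shows "(\<exists>C. is_code C \<and> card C = 17 \<and> regular_simplex C \<and> universally_optimal C
              \<and> symmetry_transitive C)
         \<and> (\<forall>C. regular_simplex C \<longrightarrow> card C \<le> 17)"
proof -
  have "regular_simplex simplex17"
    unfolding regular_simplex_def
    using simplex17_code chordal_dist_sq_simplex17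
    by (metis chordal_dist_eq_norm norm_ge_zero real_sqrt_unique)
  moreover have "universally_optimal simplex17"
    using simplex17_code card_simplex17 chordal_dist_sq_simplex17
    by (intro universally_optimal_if_equidistant[of _ 17]) auto
  ultimately show ?thesis
    using simplex17_code card_simplex17 simplex17_transitive card_regular_simplex_le by blast
qed

end
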